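(* Let $k$ be a positive integer, let $L=\{\ell_1,\ldots,\ell_s\}\subset[0,k-1]$ with $\ell_1<\cdots<\ell_s$, and let $L^C=[0,k-1]\setminus L=\{\ell'_1,\ldots,\ell'_{k-s}\}$ with $\ell'_1<\cdots<\ell'_{k-s}$. Suppose $L$ contains $b$ full runs of consecutive integers with lengths $m_i$ ($1\le i\le b$) and $L^C$ contains $b'$ full runs of consecutive integers with lengths $m'_j$ ($1\le j\le b'$). Then \[\prod_{i=1}^{b}m_i!\cdot\frac{\binom{k}{k-\ell_1}\binom{k-\ell_1-1}{k-\ell_2}\cdots\binom{k-\ell_{s-1}-1}{k-\ell_s}}{\prod_{i=1}^s(\ell_i+1)(k-\ell_i)}\cdot\prod_{j=1}^{b'}m'_j!\cdot\frac{\binom{k}{k-\ell'_1}\binom{k-\ell'_1-1}{k-\ell'_2}\cdots\binom{k-\ell'_{k-s-1}-1}{k-\ell'_{k-s}}}{\prod_{i=1}^{k-s}(\ell'_i+1)(k-\ell'_i)}=\frac{1}{k!}.\]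
   Context: $[a,b]=\{a,\ldots,b\}$. For a finite set of integers $\{x_1<\cdots<x_t\}$, a subset $\{x_m,\ldots,x_{m+p}\}$ is a run if $x_{m+i}=x_m+i$ for $0\le i\le p$; it is a full run if moreover ($m=1$ or $x_{m-1}<x_m-1$) and ($m+p=t$ or $x_{m+p+1}>x_{m+p}+1$). The set decomposes uniquely into full runs; the length of a run is its cardinality. *)

theory Defs
  imports Complex_Main
begin

text \<open>The condition (a = 0 or a - 1 not in S) expresses that the preceding element of the set
  (if any) is smaller than a - 1; likewise Suc b not in S for the following element.\<close>
definition full_runs :: "nat set \<Rightarrow> nat set set" where
  "full_runs S = {{a..b} | a b. a \<le> b \<and> {a..b} \<subseteq> S \<and> (a = 0 \<or> a - 1 \<notin> S) \<and> Suc b \<notin> S}"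

fun chain_binom_aux :: "nat \<Rightarrow> nat \<Rightarrow> nat list \<Rightarrow> nat" where
  "chain_binom_aux k p [] = 1"
| "chain_binom_aux k p (y # ys) = ((k - p - 1) choose (k - y)) * chain_binom_aux k y ys"

fun chain_binom :: "nat \<Rightarrow> nat list \<Rightarrow> nat" where
  "chain_binom k [] = 1"
| "chain_binom k (x # xs) = (k choose (k - x)) * chain_binom_aux k x xs"

end

theory Submission
  imports Defs
begin

text \<open>For \<open>q \<le> y\<^sub>1 < \<dots> < y\<^sub>s < k\<close>, the chain of binomials times \<open>\<Prod>(k - y\<^sub>i)\<close> is the
  multinomial coefficient \<open>(k - q)! / \<Prod> g!\<close>, where \<open>g\<close> runs over the lengths of the gaps
  \<open>[q, y\<^sub>1), (y\<^sub>1, y\<^sub>2), \<dots>, (y\<^sub>s, k)\<close>; the nonempty gaps are exactly the full runs of the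
  complement of \<open>{y\<^sub>i}\<close> in \<open>[q, k)\<close>. For \<open>q = 0\<close>, applied to \<open>L\<close> and to its complement \<open>L\<^sup>C\<close>
  in \<open>[0, k)\<close>, this gives two identities whose product, together with
  \<open>\<Prod>\<^sub>L (k - l) \<cdot> \<Prod>\<^sub>L\<^sub>C (k - l) = \<Prod>\<^sub>L (l + 1) \<cdot> \<Prod>\<^sub>L\<^sub>C (l + 1) = k!\<close>, yields the claim.\<close>

fun chain_binom_from :: "nat \<Rightarrow> nat \<Rightarrow> nat list \<Rightarrow> nat" where
  "chain_binom_from k q [] = 1"
| "chain_binom_from k q (y # ys) = ((k - q) choose (k - y)) * chain_binom_from k (Suc y) ys"

lemma chain_binom_aux_eq_chain_binom_from:
  "chain_binom_aux k p ys = chain_binom_from k (Suc p) ys"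
  by (induction ys arbitrary: p) auto

lemma chain_binom_eq_chain_binom_from: "chain_binom k ys = chain_binom_from k 0 ys"
  by (cases ys) (auto simp: chain_binom_aux_eq_chain_binom_from)

lemma finite_full_runs: "finite S \<Longrightarrow> finite (full_runs S)"
  by (rule finite_subset[of _ "Pow S"]) (auto simp: full_runs_def)

lemma full_runs_subset: "R \<in> full_runs S \<Longrightarrow> R \<subseteq> S"
  and full_runs_nonempty: "R \<in> full_runs S \<Longrightarrow> R \<noteq> {}"
  by (auto simp: full_runs_def)

lemma full_runs_Un_separated:
  assumes A: "\<And>x. x \<in> A \<Longrightarrow> x < g"
    and B: "\<And>x. x \<in> B \<Longrightarrow> g < x"
  shows "full_runs (A \<union> B) = full_runs A \<union> full_runs B"
proof -
  have split: "{a..b} \<subseteq> A \<union> B \<longleftrightarrow> {a..b} \<subseteq> A \<or> {a..b} \<subseteq> B" for a b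
  proof
    assume sub: "{a..b} \<subseteq> A \<union> B"
    have "g \<notin> A \<union> B"
      using A B by blast
    then have "g \<notin> {a..b}"
      using sub by blast
    then consider "b < g" | "g < a"
      by fastforce
    then show "{a..b} \<subseteq> A \<or> {a..b} \<subseteq> B"
      by cases (use sub A B in \<open>fastforce+\<close>)
  qed auto
  have boundary_A: "Suc b \<notin> B \<and> (a = 0 \<or> a - 1 \<notin> B)" if "a \<le> b" "{a..b} \<subseteq> A" for a b
    using that A[of b] B[of "Suc b"] B[of "a - 1"] by auto
  have boundary_B: "Suc b \<notin> A \<and> (a = 0 \<or> a - 1 \<notin> A)" if "a \<le> b" "{a..b} \<subseteq> B" for a b
    using that B[of a] A[of "Suc b"] A[of "a - 1"] by auto
  show ?thesis
  proof (intro equalityI subsetI)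
    fix R assume "R \<in> full_runs (A \<union> B)"
    then obtain a b where "R = {a..b}" "a \<le> b" "{a..b} \<subseteq> A \<or> {a..b} \<subseteq> B"
      "a = 0 \<or> a - 1 \<notin> A \<union> B" "Suc b \<notin> A \<union> B"
      using split by (auto simp: full_runs_def)
    then show "R \<in> full_runs A \<union> full_runs B"
      unfolding full_runs_def by blast
  next
    fix R assume "R \<in> full_runs A \<union> full_runs B"
    then obtain a b where R: "R = {a..b}" "a \<le> b"
      and "{a..b} \<subseteq> A \<and> (a = 0 \<or> a - 1 \<notin> A) \<and> Suc b \<notin> A
         \<or> {a..b} \<subseteq> B \<and> (a = 0 \<or> a - 1 \<notin> B) \<and> Suc b \<notin> B"
      unfolding full_runs_def by blast
    then have "{a..b} \<subseteq> A \<union> B" "a = 0 \<or> a - 1 \<notin> A \<union> B" "Suc b \<notin> A \<union> B"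
      using boundary_A boundary_B by auto
    then show "R \<in> full_runs (A \<union> B)"
      using R unfolding full_runs_def by blast
  qed
qed

lemma full_runs_atLeastLessThan:
  "full_runs {a..<b} = (if a < b then {{a..b - 1}} else {})"
proof (cases "a < b")
  case True
  have "R = {a..b - 1}" if R: "R \<in> full_runs {a..<b}" for R
  proof -
    obtain c d where R_eq: "R = {c..d}" and "c \<le> d" "{c..d} \<subseteq> {a..<b}"
      and left: "c = 0 \<or> c - 1 \<notin> {a..<b}" and right: "Suc d \<notin> {a..<b}"
      using R unfolding full_runs_def by blast
    then have "a \<le> c" "d < b"
      by auto
    with \<open>c \<le> d\<close> left right have "c = a" "d = b - 1"
      by auto
    with R_eq show ?thesis
      by simp
  qed
  moreover have "{a..b - 1} \<in> full_runs {a..<b}"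
    using True unfolding full_runs_def by (intro CollectI exI[of _ a] exI[of _ "b - 1"]) auto
  ultimately have "full_runs {a..<b} = {{a..b - 1}}"
    by blast
  with True show ?thesis
    by simp
next
  case False
  then show ?thesis
    unfolding full_runs_def by auto
qed

lemma prod_fact_full_runs_atLeastLessThan:
  "(\<Prod>R\<in>full_runs {a..<b}. fact (card R)) = (fact (b - a) :: nat)"
  by (simp add: full_runs_atLeastLessThan)

lemma prod_fact_full_runs_remove_first:
  assumes "q \<le> y" and "y < k" and "Y \<subseteq> {Suc y..<k}"
  shows "(\<Prod>R\<in>full_runs ({q..<k} - insert y Y). fact (card R))
       = (fact (y - q) :: nat) * (\<Prod>R\<in>full_runs ({Suc y..<k} - Y). fact (card R))"
proof -
  have split: "{q..<k} - insert y Y = {q..<y} \<union> ({Suc y..<k} - Y)"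
    using assms by fastforce
  have "full_runs ({q..<y} \<union> ({Suc y..<k} - Y)) = full_runs {q..<y} \<union> full_runs ({Suc y..<k} - Y)"
    by (rule full_runs_Un_separated[where g = y]) auto
  moreover have "full_runs {q..<y} \<inter> full_runs ({Suc y..<k} - Y) = {}"
  proof -
    have "{q..<y} \<inter> ({Suc y..<k} - Y) = {}"
      by auto
    then show ?thesis
      using full_runs_subset full_runs_nonempty by blast
  qed
  ultimately show ?thesis
    unfolding split
    by (simp add: prod.union_disjoint finite_full_runs prod_fact_full_runs_atLeastLessThan)
qed

lemma chain_binom_from_multinomial:
  assumes "sorted_wrt (<) ys" and "set ys \<subseteq> {q..<k}"
  shows "chain_binom_from k q ys * (\<Prod>y\<in>set ys. k - y)
           * (\<Prod>R\<in>full_runs ({q..<k} - set ys). fact (card R)) = fact (k - q)"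
  using assms
proof (induction ys arbitrary: q)
  case Nil
  then show ?case
    by (simp add: prod_fact_full_runs_atLeastLessThan)
next
  case (Cons y ys)
  have y: "q \<le> y" "y < k" and ys: "set ys \<subseteq> {Suc y..<k}" and "sorted_wrt (<) ys"
    using Cons.prems by (auto simp: Suc_le_eq)
  have IH: "chain_binom_from k (Suc y) ys * (\<Prod>y\<in>set ys. k - y)
              * (\<Prod>R\<in>full_runs ({Suc y..<k} - set ys). fact (card R)) = fact (k - Suc y)"
    using \<open>sorted_wrt (<) ys\<close> ys by (rule Cons.IH)
  have "y \<notin> set ys"
    using ys by auto
  have runs: "(\<Prod>R\<in>full_runs ({q..<k} - set (y # ys)). fact (card R))
      = (fact (y - q) :: nat) * (\<Prod>R\<in>full_runs ({Suc y..<k} - set ys). fact (card R))"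
    using prod_fact_full_runs_remove_first[OF y ys] by simp
  have fact_step: "(k - y) * fact (k - Suc y) = (fact (k - y) :: nat)"
    using y by (simp add: fact_reduce)
  have "chain_binom_from k q (y # ys) * (\<Prod>y\<in>set (y # ys). k - y)
          * (\<Prod>R\<in>full_runs ({q..<k} - set (y # ys)). fact (card R))
      = ((k - q) choose (k - y)) * fact (y - q) * ((k - y) * (chain_binom_from k (Suc y) ys
          * (\<Prod>y\<in>set ys. k - y) * (\<Prod>R\<in>full_runs ({Suc y..<k} - set ys). fact (card R))))"
    using \<open>y \<notin> set ys\<close> unfolding runs by (simp add: mult_ac)
  also have "\<dots> = fact (k - y) * fact (y - q) * ((k - q) choose (k - y))"
    unfolding IH fact_step by (simp add: mult_ac)
  also have "\<dots> = fact (k - q)"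
    using binomial_fact_lemma[of "k - y" "k - q"] y by simp
  finally show ?case .
qed

lemma chain_binom_multinomial:
  assumes "L \<subseteq> {0..<k}"
  shows "chain_binom k (sorted_list_of_set L) * (\<Prod>l\<in>L. k - l)
           * (\<Prod>R\<in>full_runs ({0..<k} - L). fact (card R)) = fact k"
proof -
  have "finite L"
    using assms finite_subset by blast
  then show ?thesis
    using chain_binom_from_multinomial[of "sorted_list_of_set L" 0 k] assms
    by (simp add: chain_binom_eq_chain_binom_from strict_sorted_list_of_set)
qed

lemma prod_upper_complement:
  "L \<subseteq> {0..<k} \<Longrightarrow> (\<Prod>l\<in>L. k - l) * (\<Prod>l\<in>{0..<k} - L. k - l) = fact k"
  using prod.subset_diff[of L "{0..<k}" "\<lambda>l. k - l"] by (simp add: fact_prod_rev mult.commute)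

lemma prod_lower_complement:
  "L \<subseteq> {0..<k} \<Longrightarrow> (\<Prod>l\<in>L. l + 1) * (\<Prod>l\<in>{0..<k} - L. l + 1) = fact k"
  using prod.subset_diff[of L "{0..<k}" "\<lambda>l. l + 1"] by (simp add: fact_prod_Suc mult.commute)

lemma runs_chain_binom_complement:
  assumes "L \<subseteq> {0..<k}"
  shows "(\<Prod>R\<in>full_runs L. fact (card R)) * (\<Prod>R\<in>full_runs ({0..<k} - L). fact (card R))
           * (chain_binom k (sorted_list_of_set L) * chain_binom k (sorted_list_of_set ({0..<k} - L)))
         = fact k"
proof -
  have complement: "{0..<k} - ({0..<k} - L) = L"
    using assms by auto
  have "(\<Prod>R\<in>full_runs L. fact (card R)) * (\<Prod>R\<in>full_runs ({0..<k} - L). fact (card R))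
      * (chain_binom k (sorted_list_of_set L) * chain_binom k (sorted_list_of_set ({0..<k} - L)))
      * ((\<Prod>l\<in>L. k - l) * (\<Prod>l\<in>{0..<k} - L. k - l)) = fact k * fact k"
    using arg_cong2[where f = "(*)", OF chain_binom_multinomial[OF assms]
        chain_binom_multinomial[of "{0..<k} - L" k]]
    unfolding complement by (simp only: Diff_subset mult_ac)
  then show ?thesis
    unfolding prod_upper_complement[OF assms] by simp
qed

theorem claim1:
  fixes k :: nat and L :: "nat set"
  assumes "k > 0" and "L \<subseteq> {0..k-1}"
  defines "Lc \<equiv> {0..k-1} - L"
  shows "real (\<Prod>R\<in>full_runs L. fact (card R))
           * real (chain_binom k (sorted_list_of_set L))
           / real (\<Prod>l\<in>L. (l + 1) * (k - l))
         * real (\<Prod>R\<in>full_runs Lc. fact (card R))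
           * real (chain_binom k (sorted_list_of_set Lc))
           / real (\<Prod>l\<in>Lc. (l + 1) * (k - l))
         = 1 / fact k"
proof -
  have "{0..k-1} = {0..<k}"
    using assms(1) by auto
  then have L: "L \<subseteq> {0..<k}" and Lc: "Lc = {0..<k} - L"
    using assms(2) unfolding Lc_def by auto
  have "real (\<Prod>R\<in>full_runs L. fact (card R))
           * real (chain_binom k (sorted_list_of_set L))
           / real (\<Prod>l\<in>L. (l + 1) * (k - l))
         * real (\<Prod>R\<in>full_runs Lc. fact (card R))
           * real (chain_binom k (sorted_list_of_set Lc))
           / real (\<Prod>l\<in>Lc. (l + 1) * (k - l))
      = real ((\<Prod>R\<in>full_runs L. fact (card R)) * (\<Prod>R\<in>full_runs Lc. fact (card R))
             * (chain_binom k (sorted_list_of_set L) * chain_binom k (sorted_list_of_set Lc)))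
        / (real ((\<Prod>l\<in>L. l + 1) * (\<Prod>l\<in>Lc. l + 1)) * real ((\<Prod>l\<in>L. k - l) * (\<Prod>l\<in>Lc. k - l)))"
    unfolding prod.distrib of_nat_mult by (simp add: ac_simps)
  also have "\<dots> = 1 / fact k"
    unfolding Lc runs_chain_binom_complement[OF L] prod_upper_complement[OF L]
      prod_lower_complement[OF L] by simp
  finally show ?thesis .
qed

end
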